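(* In a $\$$-bounded contract, for all $\mathcal{A}\subseteq\mathbb{A}$ (possibly infinite), all mempools $\mathcal{P}\subseteq\mathbb{X}$ and all states $s$, there exists a finite $\mathcal{A}_0\subseteq\mathcal{A}$ such that for every $\mathcal{B}$ with $\mathcal{A}_0\subseteq\mathcal{B}\subseteq\mathcal{A}$, $\mathrm{MEV}_{\mathcal{A}_0}(s,\mathcal{P})=\mathrm{MEV}_{\mathcal{B}}(s,\mathcal{P})$.
   Context: Fix a countably infinite set $\mathbb{A}$ of actors, a set $\mathbb{T}$ of token types and a set $\mathbb{X}$ of transactions. A wallet is a function $\mathbb{T}\to\mathbb{N}$; $\mathbb{W}_{\mathrm{fin}}$ is the set of finite-support wallets. A wallet state is $W:\mathbb{A}\to(\mathbb{T}\to\mathbb{N})$ satisfying the finite tokens axiom $\sum_{\tau}\sum_{a\in\mathbb{A}}W(a)(\tau)\in\mathbb{N}$. A contract consists of blockchain states $\mathbb{S}=\mathbb{C}\times\mathbb{W}$ (contract state, wallet state), a partial transition function $\mapsto:(\mathbb{S}\times\mathbb{X})\rightharpoonup\mathbb{S}$ and initial states $\mathbb{S}_0$. A transaction $x$ is valid in $s$ if $s\xmapsto{x}s'$ for some $s'$. For finite sequences, $s\xrightarrow{\varepsilon}s$, and $s\xrightarrow{\vec{Y}x}s'$ iff either $s\xrightarrow{\vec{Y}}s''\xmapsto{x}s'$, or $s\xrightarrow{\vec{Y}}s'$ and $x$ is not valid in $s'$. States are assumed reachable from $\mathbb{S}_0$. $W_{\mathcal{A}}(s)=\sum_{a\in\mathcal{A}}W(s)(a)$.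 A wealth function is an additive map $\$:\mathbb{W}_{\mathrm{fin}}\to\mathbb{N}$; $\$_{\mathcal{A}}(s)=\$(W_{\mathcal{A}}(s))$; the gain is $G_{\mathcal{A}}(s,\vec{X})=\$_{\mathcal{A}}(s')-\$_{\mathcal{A}}(s)$ where $s\xrightarrow{\vec X}s'$. The contract is $\$$-bounded if for every $s_0\in\mathbb{S}_0$ there is $n$ such that $\$_{\mathbb{A}}(s)<n$ for all $s$ reachable from $s_0$. A transaction deducibility function $\kappa:\mathcal{P}(\mathbb{A})\times\mathcal{P}(\mathbb{X})\to\mathcal{P}(\mathbb{X})$, $(\mathcal{A},\mathcal{X})\mapsto\kappa_{\mathcal{A}}(\mathcal{X})$, satisfies: extensivity $\mathcal{X}\subseteq\kappa_{\mathcal{A}}(\mathcal{X})$; idempotence $\kappa_{\mathcal{A}}(\kappa_{\mathcal{A}}(\mathcal{X}))=\kappa_{\mathcal{A}}(\mathcal{X})$; monotonicity in both arguments; continuity $\kappa_{\mathcal{A}}(\bigcup_i\mathcal{X}_i)=\bigcup_i\kappa_{\mathcal{A}}(\mathcal{X}_i)$ for increasing chains; finite causes (every finite $\mathcal{X}_0$ is contained in $\kappa_{\mathcal{A}_0}(\emptyset)$ for some finite $\mathcal{A}_0$); private knowledge ($\kappa_{\mathcal{A}}(\emptyset)\subseteq\kappa_{\mathcal{A}'}(\emptyset)$ implies $\mathcal{A}\subseteq\mathcal{A}'$); no shared secrets ($\kappa_{\mathcal{A}}(\mathcal{X})\cap\kappa_{\mathcal{B}}(\mathcal{X})\subseteq\kappa_{\mathcal{A}\cap\mathcal{B}}(\mathcal{X})$).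 $\mathcal{X}^*$ denotes finite sequences over $\mathcal{X}$. The unrealized gain is $\mathrm{uG}_{\mathcal{A}}(s)=\max\{G_{\mathcal{A}}(s,\vec{Y}):\vec{Y}\in\kappa_{\mathcal{A}}(\emptyset)^*\}$; the external gain is $\mathrm{xG}_{\mathcal{A}}(s,\vec{Y})=G_{\mathcal{A}}(s,\vec{Y})-\mathrm{uG}_{\mathcal{A}}(s)$; $\mathrm{MEV}_{\mathcal{A}}(s,\mathcal{P})=\max\{\mathrm{xG}_{\mathcal{A}}(s,\vec{Y}):\vec{Y}\in\kappa_{\mathcal{A}}(\mathcal{P})^*\}$. *)

theory Defs
  imports Main "HOL-Library.Countable_Set"
begin

text \<open>Blockchain states are pairs (contract state, wallet state); a wallet state
maps actors to wallets (token type to amount). The transition function is partial.\<close>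

type_synonym ('c,'a,'t) bstate = "'c \<times> ('a \<Rightarrow> 't \<Rightarrow> nat)"

definition wal :: "('c,'a,'t) bstate \<Rightarrow> 'a \<Rightarrow> 't \<Rightarrow> nat" where
  "wal s = snd s"

text \<open>Finite tokens axiom: the total number of tokens is a natural number.\<close>
definition finite_tokens :: "('a \<Rightarrow> 't \<Rightarrow> nat) \<Rightarrow> bool" where
  "finite_tokens W \<longleftrightarrow> finite {(a,\<tau>). W a \<tau> \<noteq> 0}"

definition fin_wallet :: "('t \<Rightarrow> nat) \<Rightarrow> bool" where
  "fin_wallet w \<longleftrightarrow> finite {\<tau>. w \<tau> \<noteq> 0}"

definition wealth_fun :: "(('t \<Rightarrow> nat) \<Rightarrow> nat) \<Rightarrow> bool" where
  "wealth_fun wlth \<longleftrightarrow> (\<forall>w w'. fin_wallet w \<longrightarrow> fin_wallet w' \<longrightarrow> wlth (\<lambda>\<tau>. w \<tau> + w' \<tau>) = wlth w + wlth w')"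

definition step1 :: "('s \<Rightarrow> 'x \<Rightarrow> 's option) \<Rightarrow> 's \<Rightarrow> 'x \<Rightarrow> 's" where
  "step1 tr s x = (case tr s x of Some s' \<Rightarrow> s' | None \<Rightarrow> s)"

definition exec :: "('s \<Rightarrow> 'x \<Rightarrow> 's option) \<Rightarrow> 's \<Rightarrow> 'x list \<Rightarrow> 's" where
  "exec tr s xs = foldl (step1 tr) s xs"

inductive reachable_from :: "('s \<Rightarrow> 'x \<Rightarrow> 's option) \<Rightarrow> 's \<Rightarrow> 's \<Rightarrow> bool"
  for tr where
  refl: "reachable_from tr s s"
| step: "reachable_from tr s0 s \<Longrightarrow> tr s x = Some s' \<Longrightarrow> reachable_from tr s0 s'"

definition reachable :: "('s \<Rightarrow> 'x \<Rightarrow> 's option) \<Rightarrow> 's set \<Rightarrow> 's \<Rightarrow> bool" where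
  "reachable tr S0 s \<longleftrightarrow> (\<exists>s0\<in>S0. reachable_from tr s0 s)"

text \<open>Joint wallet W_A(s) of a (possibly infinite) set of actors; only finitely many
summands are nonzero by the finite tokens axiom.\<close>
definition WA :: "'a set \<Rightarrow> ('c,'a,'t) bstate \<Rightarrow> 't \<Rightarrow> nat" where
  "WA A s = (\<lambda>\<tau>. \<Sum>a\<in>{a\<in>A. wal s a \<tau> \<noteq> 0}. wal s a \<tau>)"

definition wealthA :: "(('t \<Rightarrow> nat) \<Rightarrow> nat) \<Rightarrow> 'a set \<Rightarrow> ('c,'a,'t) bstate \<Rightarrow> nat" where
  "wealthA wlth A s = wlth (WA A s)"

definition gain :: "(('c,'a,'t) bstate \<Rightarrow> 'x \<Rightarrow> ('c,'a,'t) bstate option) \<Rightarrow> (('t \<Rightarrow> nat) \<Rightarrow> nat)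
    \<Rightarrow> 'a set \<Rightarrow> ('c,'a,'t) bstate \<Rightarrow> 'x list \<Rightarrow> int" where
  "gain tr wlth A s xs = int (wealthA wlth A (exec tr s xs)) - int (wealthA wlth A s)"

definition bounded_contract :: "(('c,'a,'t) bstate \<Rightarrow> 'x \<Rightarrow> ('c,'a,'t) bstate option)
    \<Rightarrow> ('c,'a,'t) bstate set \<Rightarrow> (('t \<Rightarrow> nat) \<Rightarrow> nat) \<Rightarrow> bool" where
  "bounded_contract tr S0 wlth \<longleftrightarrow>
     (\<forall>s0\<in>S0. \<exists>n. \<forall>s. reachable_from tr s0 s \<longrightarrow> wealthA wlth UNIV s < n)"

definition deducibility :: "('a set \<Rightarrow> 'x set \<Rightarrow> 'x set) \<Rightarrow> bool" where
  "deducibility \<kappa> \<longleftrightarrow>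
     (\<forall>A X. X \<subseteq> \<kappa> A X)
   \<and> (\<forall>A X. \<kappa> A (\<kappa> A X) = \<kappa> A X)
   \<and> (\<forall>A A' X X'. A \<subseteq> A' \<longrightarrow> X \<subseteq> X' \<longrightarrow> \<kappa> A X \<subseteq> \<kappa> A' X')
   \<and> (\<forall>A (Xs :: nat \<Rightarrow> 'x set). (\<forall>i. Xs i \<subseteq> Xs (Suc i)) \<longrightarrow>
          \<kappa> A (\<Union>i. Xs i) = (\<Union>i. \<kappa> A (Xs i)))
   \<and> (\<forall>X0. finite X0 \<longrightarrow> (\<exists>A0. finite A0 \<and> X0 \<subseteq> \<kappa> A0 {}))
   \<and> (\<forall>A A'. \<kappa> A {} \<subseteq> \<kappa> A' {} \<longrightarrow> A \<subseteq> A')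
   \<and> (\<forall>A B X. \<kappa> A X \<inter> \<kappa> B X \<subseteq> \<kappa> (A \<inter> B) X)"

text \<open>The maxima are taken as suprema
(in int); in a bounded contract these sets are nonempty, bounded above sets of
integers, so the supremum is attained and equals the maximum.\<close>
definition uG where
  "uG tr wlth \<kappa> A s = Sup {gain tr wlth A s ys | ys. set ys \<subseteq> \<kappa> A {}}"

definition xG where
  "xG tr wlth \<kappa> A s ys = gain tr wlth A s ys - uG tr wlth \<kappa> A s"

definition MEV where
  "MEV tr wlth \<kappa> A s P = Sup {xG tr wlth \<kappa> A s ys | ys. set ys \<subseteq> \<kappa> A P}"

end

theory Submission
  imports Defs
begin

text \<open>Only finitely many actors hold tokens in a state \<open>s\<close>, and likewise in the state
reached by any transaction sequence. Adding actors who hold nothing in \<open>s\<close> to a coalition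
can only increase its gain, and adding actors who hold nothing in either state leaves the
gain unchanged. So a sequence attaining the supremum of the gains (a set of integers bounded
thanks to the \<open>$\<close>-bound) keeps its value once a suitable finite coalition is included, and no
larger coalition does better; finite causes and no shared secrets make that sequence
deducible by a finite subcoalition. Doing this for the mempool \<open>P\<close> and for the empty mempool
(the unrealized gain) and taking the union of the two coalitions fixes the MEV.\<close>

lemma cSup_int_mem:
  fixes X :: "int set"
  assumes "X \<noteq> {}" "bdd_above X"
  shows "Sup X \<in> X"
proof (rule ccontr)
  assume "Sup X \<notin> X"
  have "x \<le> Sup X - 1" if "x \<in> X" for x
  proof -
    have "x \<le> Sup X" "x \<noteq> Sup X"
      using cSup_upper[OF that assms(2)] that \<open>Sup X \<notin> X\<close> by auto
    then show ?thesis by simp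
  qed
  then have "Sup X \<le> Sup X - 1"
    using cSup_least[OF assms(1)] by blast
  then show False by simp
qed

lemma cSup_int_diff_const:
  fixes f :: "'b \<Rightarrow> int"
  assumes "R z" and bound: "\<And>y. R y \<Longrightarrow> f y \<le> N"
  shows "Sup {f y - c | y. R y} = Sup {f y | y. R y} - c"
proof -
  let ?S = "{f y | y. R y}"
  have bdd: "bdd_above ?S"
    by (rule bdd_aboveI[where M = N]) (auto simp: bound)
  have "Sup ?S \<in> ?S"
    using cSup_int_mem[OF _ bdd] \<open>R z\<close> by blast
  then obtain y1 where "R y1" "f y1 = Sup ?S" by auto
  show ?thesis
  proof (rule cSup_eq_maximum)
    show "Sup ?S - c \<in> {f y - c | y. R y}"
      using \<open>R y1\<close> \<open>f y1 = Sup ?S\<close> by force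
  next
    fix x assume "x \<in> {f y - c | y. R y}"
    then show "x \<le> Sup ?S - c"
      using cSup_upper[OF _ bdd] by force
  qed
qed

lemma Sup_determined_by_finite_subset:
  fixes g :: "'a set \<Rightarrow> 'x list \<Rightarrow> int" and Q :: "'a set \<Rightarrow> 'x set"
    and K :: "'x list \<Rightarrow> 'a set"
  assumes Q_mono: "\<And>B B'. B \<subseteq> B' \<Longrightarrow> Q B \<subseteq> Q B'"
    and Q_finite: "\<And>ys. set ys \<subseteq> Q A \<Longrightarrow> \<exists>A1. finite A1 \<and> A1 \<subseteq> A \<and> set ys \<subseteq> Q A1"
    and bound: "\<And>B ys. g B ys \<le> N"
    and "finite H"
    and g_mono: "\<And>B B' ys. B \<subseteq> B' \<Longrightarrow> (B' - B) \<inter> H = {} \<Longrightarrow> g B ys \<le> g B' ys"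
    and "\<And>ys. finite (K ys)"
    and g_local: "\<And>B B' ys. B \<subseteq> B' \<Longrightarrow> (B' - B) \<inter> K ys = {} \<Longrightarrow> g B ys = g B' ys"
  shows "\<exists>A0. finite A0 \<and> A0 \<subseteq> A \<and>
     (\<forall>B. A0 \<subseteq> B \<and> B \<subseteq> A \<longrightarrow> Sup {g B ys | ys. set ys \<subseteq> Q B} = Sup {g A ys | ys. set ys \<subseteq> Q A})"
proof -
  define S where "S B = {g B ys | ys. set ys \<subseteq> Q B}" for B
  have bdd: "bdd_above (S B)" for B
    by (rule bdd_aboveI[where M = N]) (auto simp: S_def bound)
  have "g A [] \<in> S A"
    unfolding S_def by auto
  then have "Sup (S A) \<in> S A"
    using cSup_int_mem[OF _ bdd] by blast
  then obtain ys where ys: "set ys \<subseteq> Q A" "g A ys = Sup (S A)"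
    unfolding S_def by auto
  obtain A1 where A1: "finite A1" "A1 \<subseteq> A" "set ys \<subseteq> Q A1"
    using Q_finite[OF ys(1)] by blast
  \<comment> \<open>\<open>A \<inter> H\<close> makes \<open>g\<close> increase from any \<open>B \<supseteq> A0\<close> up to \<open>A\<close>; \<open>A \<inter> K ys\<close> keeps the maximiser's value.\<close>
  define A0 where "A0 = A1 \<union> (A \<inter> H) \<union> (A \<inter> K ys)"
  have "Sup (S B) = Sup (S A)" if B: "A0 \<subseteq> B" "B \<subseteq> A" for B
  proof (rule cSup_eq_maximum)
    have "set ys \<subseteq> Q B"
      using A1 B Q_mono unfolding A0_def by blast
    then have "g B ys \<in> S B"
      unfolding S_def by blast
    moreover have "g B ys = g A ys"
      using g_local[of B A ys] B unfolding A0_def by blast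
    ultimately show "Sup (S A) \<in> S B"
      using ys(2) by simp
  next
    fix x assume "x \<in> S B"
    then obtain zs where zs: "set zs \<subseteq> Q B" "x = g B zs"
      unfolding S_def by auto
    have "g B zs \<le> g A zs"
      using g_mono[of B A zs] B unfolding A0_def by blast
    moreover have "g A zs \<in> S A"
      using zs(1) Q_mono[OF B(2)] unfolding S_def by blast
    ultimately show "x \<le> Sup (S A)"
      using zs(2) cSup_upper[OF _ bdd] by force
  qed
  moreover have "finite A0" "A0 \<subseteq> A"
    unfolding A0_def using A1 \<open>finite H\<close> \<open>finite (K ys)\<close> by auto
  ultimately show ?thesis
    unfolding S_def by blast
qed

definition holders :: "('c,'a,'t) bstate \<Rightarrow> 'a set" where
  "holders s = {a. \<exists>\<tau>. wal s a \<tau> \<noteq> 0}"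

lemma finite_holders: "finite_tokens (wal s) \<Longrightarrow> finite (holders s)"
proof -
  assume "finite_tokens (wal s)"
  then have "finite (fst ` {(a,\<tau>). wal s a \<tau> \<noteq> 0})"
    unfolding finite_tokens_def by blast
  moreover have "holders s = fst ` {(a,\<tau>). wal s a \<tau> \<noteq> 0}"
    unfolding holders_def by force
  ultimately show ?thesis by simp
qed

lemma fin_wallet_WA:
  assumes "finite_tokens (wal s)"
  shows "fin_wallet (WA B s)"
proof -
  have "{\<tau>. WA B s \<tau> \<noteq> 0} \<subseteq> snd ` {(a,\<tau>). wal s a \<tau> \<noteq> 0}"
  proof
    fix \<tau> assume "\<tau> \<in> {\<tau>. WA B s \<tau> \<noteq> 0}"
    have "{a\<in>B. wal s a \<tau> \<noteq> 0} \<noteq> {}"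
    proof
      assume "{a\<in>B. wal s a \<tau> \<noteq> 0} = {}"
      then have "WA B s \<tau> = 0"
        unfolding WA_def by (simp only: sum.empty)
      with \<open>\<tau> \<in> {\<tau>. WA B s \<tau> \<noteq> 0}\<close> show False by simp
    qed
    then obtain a where "wal s a \<tau> \<noteq> 0" by blast
    then show "\<tau> \<in> snd ` {(a,\<tau>). wal s a \<tau> \<noteq> 0}" by force
  qed
  moreover have "finite (snd ` {(a,\<tau>). wal s a \<tau> \<noteq> 0})"
    using assms unfolding finite_tokens_def by blast
  ultimately show ?thesis
    unfolding fin_wallet_def by (rule finite_subset)
qed

lemma WA_Un_disjoint:
  assumes "finite_tokens (wal s)" "B \<inter> C = {}"
  shows "WA (B \<union> C) s = (\<lambda>\<tau>. WA B s \<tau> + WA C s \<tau>)"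
proof
  fix \<tau>
  have fin: "finite {a\<in>D. wal s a \<tau> \<noteq> 0}" for D
    by (rule finite_subset[OF _ finite_holders[OF assms(1)]]) (auto simp: holders_def)
  have eq: "{a\<in>B \<union> C. wal s a \<tau> \<noteq> 0} = {a\<in>B. wal s a \<tau> \<noteq> 0} \<union> {a\<in>C. wal s a \<tau> \<noteq> 0}"
    by auto
  show "WA (B \<union> C) s \<tau> = WA B s \<tau> + WA C s \<tau>"
    unfolding WA_def eq using sum.union_disjoint[OF fin[of B] fin[of C]] assms(2) by auto
qed

lemma wealth_fun_zero: "wealth_fun w \<Longrightarrow> w (\<lambda>_. 0) = 0"
proof -
  assume "wealth_fun w"
  moreover have "fin_wallet (\<lambda>_. 0)"
    unfolding fin_wallet_def by simp
  ultimately have "w (\<lambda>\<tau>. 0 + 0) = w (\<lambda>_. 0) + w (\<lambda>_. 0)"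
    unfolding wealth_fun_def by blast
  then show ?thesis by simp
qed

lemma wealthA_Un_disjoint:
  assumes "wealth_fun w" "finite_tokens (wal s)" "B \<inter> C = {}"
  shows "wealthA w (B \<union> C) s = wealthA w B s + wealthA w C s"
  using assms fin_wallet_WA[OF assms(2)]
  unfolding wealthA_def WA_Un_disjoint[OF assms(2,3)] wealth_fun_def by blast

lemma wealthA_eq_0_if_no_holders:
  assumes "wealth_fun w" "C \<inter> holders s = {}"
  shows "wealthA w C s = 0"
proof -
  have "{a\<in>C. wal s a \<tau> \<noteq> 0} = {}" for \<tau>
    using assms(2) unfolding holders_def by blast
  then have "WA C s = (\<lambda>_. 0)"
    unfolding WA_def by simp
  then show ?thesis
    unfolding wealthA_def using wealth_fun_zero[OF assms(1)] by simp
qed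

lemma wealthA_le_UNIV:
  assumes "wealth_fun w" "finite_tokens (wal s)"
  shows "wealthA w B s \<le> wealthA w UNIV s"
  using wealthA_Un_disjoint[OF assms, of B "- B"] by simp

lemma gain_superset:
  assumes "wealth_fun wlth" "finite_tokens (wal s)" "finite_tokens (wal (exec tr s ys))"
    and "B \<subseteq> B'" "(B' - B) \<inter> holders s = {}"
  shows "gain tr wlth B' s ys = gain tr wlth B s ys + int (wealthA wlth (B' - B) (exec tr s ys))"
proof -
  have B': "B \<union> (B' - B) = B'" and disj: "B \<inter> (B' - B) = {}"
    using assms(4) by auto
  have "wealthA wlth B' s = wealthA wlth B s"
    using wealthA_Un_disjoint[OF assms(1,2) disj, unfolded B']
      wealthA_eq_0_if_no_holders[OF assms(1,5)] by simp
  moreover have "wealthA wlth B' (exec tr s ys)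
      = wealthA wlth B (exec tr s ys) + wealthA wlth (B' - B) (exec tr s ys)"
    using wealthA_Un_disjoint[OF assms(1,3) disj, unfolded B'] .
  ultimately show ?thesis
    unfolding gain_def by simp
qed

lemma reachable_from_exec:
  "reachable_from tr s0 s \<Longrightarrow> reachable_from tr s0 (exec tr s ys)"
proof (induction ys arbitrary: s)
  case Nil
  then show ?case by (simp add: exec_def)
next
  case (Cons y ys)
  have "reachable_from tr s0 (step1 tr s y)"
    using Cons.prems by (cases "tr s y") (auto simp: step1_def intro: reachable_from.step)
  then have "reachable_from tr s0 (exec tr (step1 tr s y) ys)"
    by (rule Cons.IH)
  then show ?case
    by (simp add: exec_def)
qed

lemma reachable_exec: "reachable tr S0 s \<Longrightarrow> reachable tr S0 (exec tr s ys)"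
  unfolding reachable_def using reachable_from_exec[of tr _ s ys] by blast

lemma bounded_contract_exec_bound:
  assumes "bounded_contract tr S0 wlth" "reachable tr S0 s"
  obtains n where "\<And>ys. wealthA wlth UNIV (exec tr s ys) < n"
proof -
  obtain s0 where "s0 \<in> S0" "reachable_from tr s0 s"
    using assms(2) unfolding reachable_def by blast
  moreover obtain n where "\<And>s'. reachable_from tr s0 s' \<Longrightarrow> wealthA wlth UNIV s' < n"
    using assms(1) \<open>s0 \<in> S0\<close> unfolding bounded_contract_def by blast
  ultimately show thesis
    using that reachable_from_exec[of tr s0 s] by blast
qed

lemma deducibility_mono:
  assumes "deducibility \<kappa>" "B \<subseteq> B'" "X \<subseteq> X'"
  shows "\<kappa> B X \<subseteq> \<kappa> B' X'"
proof -
  have "\<forall>A A' X X'. A \<subseteq> A' \<longrightarrow> X \<subseteq> X' \<longrightarrow> \<kappa> A X \<subseteq> \<kappa> A' X'"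
    using assms(1) unfolding deducibility_def by (elim conjE) assumption
  then show ?thesis
    using assms(2,3) by blast
qed

lemma deducible_by_finite_subset:
  assumes \<kappa>: "deducibility \<kappa>" and "set ys \<subseteq> \<kappa> A X"
  shows "\<exists>A1. finite A1 \<and> A1 \<subseteq> A \<and> set ys \<subseteq> \<kappa> A1 X"
proof -
  have finite_causes: "\<forall>X0. finite X0 \<longrightarrow> (\<exists>A0. finite A0 \<and> X0 \<subseteq> \<kappa> A0 {})"
    using \<kappa> unfolding deducibility_def by (elim conjE) assumption
  have no_shared_secrets: "\<forall>A B X. \<kappa> A X \<inter> \<kappa> B X \<subseteq> \<kappa> (A \<inter> B) X"
    using \<kappa> unfolding deducibility_def by (elim conjE) assumption
  obtain C where "finite C" "set ys \<subseteq> \<kappa> C {}"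
    using finite_causes by blast
  then have "set ys \<subseteq> \<kappa> A X \<inter> \<kappa> C X"
    using assms(2) deducibility_mono[OF \<kappa>, of C C "{}" X] by blast
  also have "\<dots> \<subseteq> \<kappa> (A \<inter> C) X"
    using no_shared_secrets by blast
  finally show ?thesis
    using \<open>finite C\<close> by (intro exI[of _ "A \<inter> C"]) auto
qed

lemma gain_le_wealth_bound:
  assumes "wealth_fun wlth" "finite_tokens (wal (exec tr s ys))"
    and "wealthA wlth UNIV (exec tr s ys) < n"
  shows "gain tr wlth B s ys \<le> int n"
  using wealthA_le_UNIV[OF assms(1,2), of B] assms(3) unfolding gain_def by simp

lemma Sup_gain_determined_by_finite_subset:
  fixes tr :: "('c,'a,'t) bstate \<Rightarrow> 'x \<Rightarrow> ('c,'a,'t) bstate option"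
  assumes wealth: "wealth_fun wlth" and \<kappa>: "deducibility \<kappa>"
    and ftok: "\<And>ys. finite_tokens (wal (exec tr s ys))"
    and bound: "\<And>ys. wealthA wlth UNIV (exec tr s ys) < n"
  shows "\<exists>A0. finite A0 \<and> A0 \<subseteq> A \<and> (\<forall>B. A0 \<subseteq> B \<and> B \<subseteq> A \<longrightarrow>
     Sup {gain tr wlth B s ys | ys. set ys \<subseteq> \<kappa> B X} = Sup {gain tr wlth A s ys | ys. set ys \<subseteq> \<kappa> A X})"
proof (rule Sup_determined_by_finite_subset[where Q = "\<lambda>B. \<kappa> B X"
      and g = "\<lambda>B ys. gain tr wlth B s ys" and N = "int n" and H = "holders s"
      and K = "\<lambda>ys. holders s \<union> holders (exec tr s ys)"])
  have fts: "finite_tokens (wal s)"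
    using ftok[of "[]"] by (simp add: exec_def)
  show "finite (holders s)" "finite (holders s \<union> holders (exec tr s ys))" for ys
    using finite_holders[OF fts] finite_holders[OF ftok] by auto
  show "\<kappa> B X \<subseteq> \<kappa> B' X" if "B \<subseteq> B'" for B B'
    using deducibility_mono[OF \<kappa> that] by blast
  show "\<exists>A1. finite A1 \<and> A1 \<subseteq> A \<and> set ys \<subseteq> \<kappa> A1 X" if "set ys \<subseteq> \<kappa> A X" for ys
    using deducible_by_finite_subset[OF \<kappa> that] .
  show "gain tr wlth B s ys \<le> int n" for B ys
    using gain_le_wealth_bound[OF wealth ftok bound] .
  fix B B' :: "'a set" and ys
  assume "B \<subseteq> B'"
  note split = gain_superset[OF wealth fts ftok \<open>B \<subseteq> B'\<close>]
  show "gain tr wlth B s ys \<le> gain tr wlth B' s ys" if "(B' - B) \<inter> holders s = {}"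
    using split[OF that] by simp
  show "gain tr wlth B s ys = gain tr wlth B' s ys"
    if "(B' - B) \<inter> (holders s \<union> holders (exec tr s ys)) = {}"
  proof -
    have "(B' - B) \<inter> holders s = {}" "(B' - B) \<inter> holders (exec tr s ys) = {}"
      using that by auto
    then show ?thesis
      using split wealthA_eq_0_if_no_holders[OF wealth] by simp
  qed
qed

lemma MEV_eq_Sup_gain_minus_uG:
  assumes "\<And>B ys. gain tr wlth B s ys \<le> N"
  shows "MEV tr wlth \<kappa> B s P
    = Sup {gain tr wlth B s ys | ys. set ys \<subseteq> \<kappa> B P} - uG tr wlth \<kappa> B s"
  unfolding MEV_def xG_def by (rule cSup_int_diff_const[where z = "[]" and N = N]) (auto simp: assms)

theorem mainTheorem13:
  fixes tr :: "('c,'a,'t) bstate \<Rightarrow> 'x \<Rightarrow> ('c,'a,'t) bstate option"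
    and S0 :: "('c,'a,'t) bstate set"
    and wlth :: "('t \<Rightarrow> nat) \<Rightarrow> nat"
    and \<kappa> :: "'a set \<Rightarrow> 'x set \<Rightarrow> 'x set"
  assumes actors: "countable (UNIV :: 'a set)" "infinite (UNIV :: 'a set)"
    and ftok: "\<And>s. reachable tr S0 s \<Longrightarrow> finite_tokens (wal s)"
    and wealth: "wealth_fun wlth"
    and kappa: "deducibility \<kappa>"
    and bnd: "bounded_contract tr S0 wlth"
  shows "\<forall>A P s. reachable tr S0 s \<longrightarrow>
           (\<exists>A0. A0 \<subseteq> A \<and> finite A0 \<and>
              (\<forall>B. A0 \<subseteq> B \<and> B \<subseteq> A \<longrightarrow> MEV tr wlth \<kappa> A0 s P = MEV tr wlth \<kappa> B s P))"
proof (intro allI impI)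
  fix A :: "'a set" and P :: "'x set" and s
  assume s: "reachable tr S0 s"
  obtain n where n: "\<And>ys. wealthA wlth UNIV (exec tr s ys) < n"
    using bounded_contract_exec_bound[OF bnd s] by blast
  note localise = Sup_gain_determined_by_finite_subset[OF wealth kappa
      ftok[OF reachable_exec[OF s]] n, of A]
  obtain AP where AP: "finite AP" "AP \<subseteq> A" "\<forall>B. AP \<subseteq> B \<and> B \<subseteq> A \<longrightarrow>
      Sup {gain tr wlth B s ys | ys. set ys \<subseteq> \<kappa> B P} = Sup {gain tr wlth A s ys | ys. set ys \<subseteq> \<kappa> A P}"
    using localise[of P] by blast
  obtain AU where AU: "finite AU" "AU \<subseteq> A" "\<forall>B. AU \<subseteq> B \<and> B \<subseteq> A \<longrightarrow>
      uG tr wlth \<kappa> B s = uG tr wlth \<kappa> A s"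
    using localise[of "{}"] unfolding uG_def by blast
  note MEV = MEV_eq_Sup_gain_minus_uG[OF
      gain_le_wealth_bound[OF wealth ftok[OF reachable_exec[OF s]] n]]
  have MEV_eq: "MEV tr wlth \<kappa> B s P = MEV tr wlth \<kappa> A s P" if "AP \<union> AU \<subseteq> B" "B \<subseteq> A" for B
    unfolding MEV using AP(3) AU(3) that by simp
  show "\<exists>A0. A0 \<subseteq> A \<and> finite A0 \<and>
      (\<forall>B. A0 \<subseteq> B \<and> B \<subseteq> A \<longrightarrow> MEV tr wlth \<kappa> A0 s P = MEV tr wlth \<kappa> B s P)"
  proof (intro exI[of _ "AP \<union> AU"] conjI allI impI)
    show "AP \<union> AU \<subseteq> A" "finite (AP \<union> AU)"
      using AP(1,2) AU(1,2) by auto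
    show "MEV tr wlth \<kappa> (AP \<union> AU) s P = MEV tr wlth \<kappa> B s P" if "AP \<union> AU \<subseteq> B \<and> B \<subseteq> A" for B
      using MEV_eq[OF order_refl \<open>AP \<union> AU \<subseteq> A\<close>] MEV_eq[of B] that by simp
  qed
qed

end
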